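(* Let $N,M$ be normal subgroups of a group $G$, with $N$ abelian of finite exponent. (i) If $\exp(N)$ is odd, then $\exp(N\otimes M)$ divides $\exp(N)$. (ii) If $\exp(N)$ is even, then $\exp(N\otimes M)$ divides $2\exp(N)$.
   Context: Conventions: ${}^g h = ghg^{-1}$. For normal subgroups $N,M$ of $G$ acting on each other by conjugation, $N\otimes M$ is the group generated by symbols $n\otimes m$ ($n\in N$, $m\in M$) subject to $nn'\otimes m=({}^n n'\otimes {}^n m)(n\otimes m)$ and $n\otimes mm'=(n\otimes m)({}^m n\otimes {}^m m')$. *)

theory Defs
  imports "HOL-Algebra.Algebra"
begin

definition conj :: "('g, 'b) monoid_scheme \<Rightarrow> 'g \<Rightarrow> 'g \<Rightarrow> 'g" where
  "conj G g h = g \<otimes>\<^bsub>G\<^esub> h \<otimes>\<^bsub>G\<^esub> inv\<^bsub>G\<^esub> g"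

definition group_exponent :: "('a, 'b) monoid_scheme \<Rightarrow> nat" where
  "group_exponent H = (if \<exists>e::nat>0. \<forall>x\<in>carrier H. x [^]\<^bsub>H\<^esub> e = \<one>\<^bsub>H\<^esub>
     then (LEAST e::nat. e > 0 \<and> (\<forall>x\<in>carrier H. x [^]\<^bsub>H\<^esub> e = \<one>\<^bsub>H\<^esub>)) else 0)"

text \<open>Words in the free group on symbols n \<otimes> m: a letter (n, m, True) is the generator
  n \<otimes> m, a letter (n, m, False) is its inverse.\<close>
type_synonym 'g tword = "('g \<times> 'g \<times> bool) list"

definition tword_ok :: "'g set \<Rightarrow> 'g set \<Rightarrow> 'g tword \<Rightarrow> bool" where
  "tword_ok N M w \<longleftrightarrow> (\<forall>(n, m, b) \<in> set w. n \<in> N \<and> m \<in> M)"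

inductive tens_eq :: "('g, 'b) monoid_scheme \<Rightarrow> 'g set \<Rightarrow> 'g set \<Rightarrow> 'g tword \<Rightarrow> 'g tword \<Rightarrow> bool"
  for G N M where
  refl: "tens_eq G N M w w"
| sym: "tens_eq G N M u v \<Longrightarrow> tens_eq G N M v u"
| trans: "tens_eq G N M u v \<Longrightarrow> tens_eq G N M v w \<Longrightarrow> tens_eq G N M u w"
| cong: "tens_eq G N M u v \<Longrightarrow> tword_ok N M x \<Longrightarrow> tword_ok N M y \<Longrightarrow>
           tens_eq G N M (x @ u @ y) (x @ v @ y)"
| cancel: "n \<in> N \<Longrightarrow> m \<in> M \<Longrightarrow> tens_eq G N M [(n, m, b), (n, m, \<not> b)] []"
| rel_left: "n \<in> N \<Longrightarrow> n' \<in> N \<Longrightarrow> m \<in> M \<Longrightarrow>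
     tens_eq G N M [(n \<otimes>\<^bsub>G\<^esub> n', m, True)]
                   [(conj G n n', conj G n m, True), (n, m, True)]"
| rel_right: "n \<in> N \<Longrightarrow> m \<in> M \<Longrightarrow> m' \<in> M \<Longrightarrow>
     tens_eq G N M [(n, m \<otimes>\<^bsub>G\<^esub> m', True)]
                   [(n, m, True), (conj G m n, conj G m m', True)]"

definition tensor_carrier :: "('g, 'b) monoid_scheme \<Rightarrow> 'g set \<Rightarrow> 'g set \<Rightarrow> 'g tword set set" where
  "tensor_carrier G N M = (\<lambda>w. {v. tens_eq G N M w v}) ` {w. tword_ok N M w}"

definition tensor_mult :: "('g, 'b) monoid_scheme \<Rightarrow> 'g set \<Rightarrow> 'g set \<Rightarrow> 'g tword set \<Rightarrow> 'g tword set \<Rightarrow> 'g tword set" where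
  "tensor_mult G N M A B = {v. \<exists>a\<in>A. \<exists>b\<in>B. tens_eq G N M (a @ b) v}"

definition tensor_grp :: "('g, 'b) monoid_scheme \<Rightarrow> 'g set \<Rightarrow> 'g set \<Rightarrow> 'g tword set monoid" where
  "tensor_grp G N M = \<lparr>carrier = tensor_carrier G N M, monoid.mult = tensor_mult G N M,
      one = {v. tens_eq G N M [] v}\<rparr>"

end

theory Submission
  imports Defs
begin

(* Let e be the exponent of the abelian group N. For d \<in> N \<inter> M the tensor a \<otimes> d commutes with
   every generator (as [a, d] = 1), and a^k \<otimes> d = (a \<otimes> d)^k, so a \<otimes> d is central with
   (a \<otimes> d)^e = 1. The commutator of two generators n \<otimes> m and a \<otimes> b is such a tensor, hence
   N \<otimes> M has class at most two and its commutators have exponent dividing e. Expanding the left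
   argument gives n^k \<otimes> m = (n \<otimes> m)^k u^(k(k-1)/2) with u = (m n m^-1) \<otimes> [n, m] of the same kind;
   for k = e this shows (n \<otimes> m)^e = u^(-e(e-1)/2), which is 1 for odd e and squares to 1 in general.
   The class-two power formula (x y)^E = x^E y^E [y, x]^(E(E-1)/2) then carries these exponents from
   the generators to every element. *)

context group
begin

lemma inv_mult_cancel_left [simp]: "g \<in> carrier G \<Longrightarrow> z \<in> carrier G \<Longrightarrow> inv g \<otimes> (g \<otimes> z) = z"
  by (simp add: m_assoc[symmetric])

lemma mult_inv_cancel_left [simp]: "g \<in> carrier G \<Longrightarrow> z \<in> carrier G \<Longrightarrow> g \<otimes> (inv g \<otimes> z) = z"
  by (simp add: m_assoc[symmetric])

definition central :: "'a \<Rightarrow> bool" where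
  "central z \<longleftrightarrow> z \<in> carrier G \<and> (\<forall>y\<in>carrier G. z \<otimes> y = y \<otimes> z)"

definition commutator :: "'a \<Rightarrow> 'a \<Rightarrow> 'a" where
  "commutator x y = x \<otimes> y \<otimes> inv x \<otimes> inv y"

lemma central_closed: "central z \<Longrightarrow> z \<in> carrier G"
  by (simp add: central_def)

lemma central_commute: "central z \<Longrightarrow> y \<in> carrier G \<Longrightarrow> z \<otimes> y = y \<otimes> z"
  by (simp add: central_def)

lemma central_one: "central \<one>"
  by (simp add: central_def)

lemma central_mult: "central a \<Longrightarrow> central b \<Longrightarrow> central (a \<otimes> b)"
  unfolding central_def by (metis m_assoc m_closed)

lemma central_nat_pow: "central a \<Longrightarrow> central (a [^] (k::nat))"
  by (induct k) (auto simp: central_one central_mult)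

lemma commutator_mult_swap: "x \<in> carrier G \<Longrightarrow> y \<in> carrier G \<Longrightarrow> commutator x y \<otimes> y \<otimes> x = x \<otimes> y"
  by (simp add: commutator_def m_assoc)

lemma commutator_eq_central:
  assumes "x \<in> carrier G" "y \<in> carrier G" "central z" and "x \<otimes> y = z \<otimes> y \<otimes> x"
  shows "commutator x y = z"
  using assms central_closed[OF assms(3)] by (simp add: commutator_def m_assoc)

lemma commutator_mult_left:
  assumes "x \<in> carrier G" "y \<in> carrier G" "s \<in> carrier G" and "central (commutator y s)"
  shows "commutator (x \<otimes> y) s = commutator y s \<otimes> commutator x s"
proof -
  have "commutator (x \<otimes> y) s = x \<otimes> (commutator y s \<otimes> s) \<otimes> inv x \<otimes> inv s"
    using assms by (simp add: commutator_def m_assoc inv_mult_group)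
  also have "\<dots> = commutator y s \<otimes> x \<otimes> s \<otimes> inv x \<otimes> inv s"
    using assms central_commute[OF assms(4), of x, symmetric] central_closed[OF assms(4)]
    by (simp add: m_assoc[symmetric])
  also have "\<dots> = commutator y s \<otimes> commutator x s"
    using assms central_closed[OF assms(4)] by (simp add: commutator_def m_assoc)
  finally show ?thesis .
qed

lemma nat_pow_commute_central:
  assumes x: "x \<in> carrier G" and y: "y \<in> carrier G" and w: "central w"
    and yx: "y \<otimes> x = w \<otimes> x \<otimes> y"
  shows "y [^] (k::nat) \<otimes> x = w [^] k \<otimes> x \<otimes> y [^] k"
proof (induction k)
  case 0
  show ?case using x by simp
next
  case (Suc k)
  have wc: "w \<in> carrier G" using w by (rule central_closed)
  have "y [^] Suc k \<otimes> x = y [^] k \<otimes> (w \<otimes> (x \<otimes> y))"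
    using x y wc yx by (simp add: m_assoc)
  also have "\<dots> = w \<otimes> (y [^] k \<otimes> x) \<otimes> y"
    using x y wc central_commute[OF w, of "y [^] k"] by (simp add: m_assoc[symmetric])
  also have "\<dots> = (w \<otimes> w [^] k) \<otimes> x \<otimes> (y [^] k \<otimes> y)"
    using Suc x y wc by (simp add: m_assoc)
  also have "\<dots> = w [^] Suc k \<otimes> x \<otimes> y [^] Suc k"
    by (simp only: nat_pow_Suc2[OF wc] nat_pow_Suc[of y])
  finally show ?case .
qed

lemma nat_pow_mult_central_commutator:
  assumes x: "x \<in> carrier G" and y: "y \<in> carrier G" and w: "central (commutator y x)"
  shows "(x \<otimes> y) [^] (k::nat) = x [^] k \<otimes> y [^] k \<otimes> commutator y x [^] (k * (k - 1) div 2)"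
proof (induction k)
  case 0
  show ?case by simp
next
  case (Suc k)
  let ?w = "commutator y x"
  have wc: "?w \<in> carrier G" using w by (rule central_closed)
  have yx: "y \<otimes> x = ?w \<otimes> x \<otimes> y" using commutator_mult_swap[OF y x] by simp
  have wk: "central (?w [^] (k * (k - 1) div 2))" using w by (rule central_nat_pow)
  have ar: "Suc k * (Suc k - 1) div 2 = k + k * (k - 1) div 2"
    by (cases k) auto
  have "(x \<otimes> y) [^] Suc k = x [^] k \<otimes> (y [^] k \<otimes> x) \<otimes> y \<otimes> ?w [^] (k * (k - 1) div 2)"
    using Suc x y central_commute[OF wk, of "x \<otimes> y"] central_closed[OF wk] by (simp add: m_assoc)
  also have "\<dots> = x [^] k \<otimes> (?w [^] k \<otimes> x \<otimes> y [^] k) \<otimes> y \<otimes> ?w [^] (k * (k - 1) div 2)"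
    using nat_pow_commute_central[OF x y w yx] by simp
  also have "\<dots> = x [^] Suc k \<otimes> y [^] Suc k \<otimes> (?w [^] k \<otimes> ?w [^] (k * (k - 1) div 2))"
    using x y wc central_commute[OF central_nat_pow[OF w, of k]] by (simp add: m_assoc)
  also have "?w [^] k \<otimes> ?w [^] (k * (k - 1) div 2) = ?w [^] (Suc k * (Suc k - 1) div 2)"
    using wc by (simp only: ar nat_pow_mult)
  finally show ?case .
qed

lemma foldr_mult_closed: "set ss \<subseteq> carrier G \<Longrightarrow> foldr (\<otimes>) ss \<one> \<in> carrier G"
  by (induction ss) auto

lemma commute_foldr_mult:
  assumes "z \<in> carrier G" "set ss \<subseteq> carrier G" and "\<And>s. s \<in> set ss \<Longrightarrow> z \<otimes> s = s \<otimes> z"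
  shows "z \<otimes> foldr (\<otimes>) ss \<one> = foldr (\<otimes>) ss \<one> \<otimes> z"
  using assms
proof (induction ss)
  case (Cons s ss)
  then have "s \<in> carrier G" "foldr (\<otimes>) ss \<one> \<in> carrier G" by (auto intro: foldr_mult_closed)
  with Cons show ?case by (simp add: m_assoc[symmetric]) (simp add: m_assoc)
qed simp

lemma central_exp_mult:
  assumes "central a" "a [^] (e::nat) = \<one>" "central b" "b [^] e = \<one>"
  shows "central (a \<otimes> b) \<and> (a \<otimes> b) [^] e = \<one>"
  using assms central_mult pow_mult_distrib[OF central_commute[OF assms(1)]] central_closed
  by simp

context
  fixes S :: "'a set" and e :: nat
  assumes gens_closed: "S \<subseteq> carrier G"
    and commutator_gens: "\<And>s s'. s \<in> S \<Longrightarrow> s' \<in> S \<Longrightarrow>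
      central (commutator s s') \<and> commutator s s' [^] e = \<one>"
begin

lemma commutator_foldr_gens:
  assumes "set ss \<subseteq> S" and "s \<in> S"
  shows "central (commutator (foldr (\<otimes>) ss \<one>) s) \<and> commutator (foldr (\<otimes>) ss \<one>) s [^] e = \<one>"
  using assms(1)
proof (induction ss)
  case Nil
  show ?case using assms(2) gens_closed by (auto simp: commutator_def central_one)
next
  case (Cons s' ss)
  have "commutator (s' \<otimes> foldr (\<otimes>) ss \<one>) s = commutator (foldr (\<otimes>) ss \<one>) s \<otimes> commutator s' s"
    using Cons assms(2) gens_closed
    by (intro commutator_mult_left) (auto intro: foldr_mult_closed)
  then show ?case
    using Cons commutator_gens[OF _ assms(2), of s'] central_exp_mult by auto
qed

lemma foldr_gens_pow_eq_one:
  assumes "set ss \<subseteq> S" and gens_pow: "\<And>s. s \<in> S \<Longrightarrow> s [^] E = \<one>"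
    and "e dvd E * (E - 1) div 2"
  shows "foldr (\<otimes>) ss \<one> [^] (E::nat) = \<one>"
  using assms(1)
proof (induction ss)
  case Nil
  show ?case by simp
next
  case (Cons s ss)
  let ?x = "foldr (\<otimes>) ss \<one>"
  have s: "s \<in> carrier G" and x: "?x \<in> carrier G"
    using Cons gens_closed by (auto intro: foldr_mult_closed)
  have w: "central (commutator ?x s)" "commutator ?x s [^] e = \<one>"
    using commutator_foldr_gens Cons by auto
  obtain q where "E * (E - 1) div 2 = e * q" using assms(3) by blast
  then have "commutator ?x s [^] (E * (E - 1) div 2) = \<one>"
    using w central_closed by (simp add: nat_pow_pow[symmetric])
  then show ?case
    using nat_pow_mult_central_commutator[OF s x w(1), of E] Cons gens_pow s x by simp
qed

end

lemma conj_closed: "g \<in> carrier G \<Longrightarrow> x \<in> carrier G \<Longrightarrow> conj G g x \<in> carrier G"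
  by (simp add: conj_def)

lemma conj_one_left: "x \<in> carrier G \<Longrightarrow> conj G \<one> x = x"
  by (simp add: conj_def)

lemma conj_conj: "g \<in> carrier G \<Longrightarrow> h \<in> carrier G \<Longrightarrow> x \<in> carrier G \<Longrightarrow>
  conj G g (conj G h x) = conj G (g \<otimes> h) x"
  by (simp add: conj_def m_assoc inv_mult_group)

lemma conj_inv_conj: "g \<in> carrier G \<Longrightarrow> x \<in> carrier G \<Longrightarrow> conj G g (conj G (inv g) x) = x"
  by (simp add: conj_def m_assoc)

lemma conj_mult_distrib: "g \<in> carrier G \<Longrightarrow> x \<in> carrier G \<Longrightarrow> y \<in> carrier G \<Longrightarrow>
  conj G g (x \<otimes> y) = conj G g x \<otimes> conj G g y"
  by (simp add: conj_def m_assoc)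

lemma conj_conj_distrib: "g \<in> carrier G \<Longrightarrow> h \<in> carrier G \<Longrightarrow> x \<in> carrier G \<Longrightarrow>
  conj G (conj G g h) (conj G g x) = conj G (g \<otimes> h) x"
  by (simp add: conj_def m_assoc inv_mult_group)

end

lemma group_exponent_spec:
  assumes "\<exists>e>0. \<forall>x\<in>carrier H. x [^]\<^bsub>H\<^esub> (e::nat) = \<one>\<^bsub>H\<^esub>"
  shows "0 < group_exponent H \<and> (\<forall>x\<in>carrier H. x [^]\<^bsub>H\<^esub> group_exponent H = \<one>\<^bsub>H\<^esub>)"
  using LeastI_ex[OF assms] assms by (simp add: group_exponent_def)

lemma (in monoid) group_exponent_dvd:
  assumes E: "0 < E" and pow_E: "\<And>x. x \<in> carrier G \<Longrightarrow> x [^] (E::nat) = \<one>"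
  shows "group_exponent G dvd E"
proof -
  let ?L = "group_exponent G"
  have ex: "\<exists>e>0. \<forall>x\<in>carrier G. x [^] (e::nat) = \<one>" using E pow_E by auto
  note L = group_exponent_spec[OF ex]
  have pow_mod: "x [^] (E mod ?L) = \<one>" if "x \<in> carrier G" for x
  proof -
    have "x [^] E = (x [^] ?L) [^] (E div ?L) \<otimes> x [^] (E mod ?L)"
      using that by (simp add: nat_pow_mult nat_pow_pow)
    then show ?thesis using that pow_E L by simp
  qed
  have "E mod ?L = 0"
  proof (rule ccontr)
    assume "E mod ?L \<noteq> 0"
    then have "?L \<le> E mod ?L"
      using pow_mod ex unfolding group_exponent_def by (auto intro: Least_le)
    then show False using L mod_less_divisor[of ?L E] by linarith
  qed
  then show ?thesis by auto
qed

locale tensor_product = group +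
  fixes N M :: "'a set"
  assumes N_normal: "N \<lhd> G" and M_normal: "M \<lhd> G"
begin

sublocale N: normal N G by (fact N_normal)
sublocale M: normal M G by (fact M_normal)

abbreviation T where "T \<equiv> tensor_grp G N M"

lemma conj_closed_N: "g \<in> carrier G \<Longrightarrow> n \<in> N \<Longrightarrow> conj G g n \<in> N"
  unfolding conj_def by (rule N.inv_op_closed2)

lemma conj_closed_M: "g \<in> carrier G \<Longrightarrow> m \<in> M \<Longrightarrow> conj G g m \<in> M"
  unfolding conj_def by (rule M.inv_op_closed2)

lemma nat_pow_mem_N: "a \<in> N \<Longrightarrow> a [^] (j::nat) \<in> N"
  by (induction j) (auto simp: N.one_closed N.m_closed)

lemma tword_ok_simps [simp]:
  "tword_ok N M []"
  "tword_ok N M ((n, m, b) # w) \<longleftrightarrow> n \<in> N \<and> m \<in> M \<and> tword_ok N M w"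
  "tword_ok N M (u @ v) \<longleftrightarrow> tword_ok N M u \<and> tword_ok N M v"
  by (auto simp: tword_ok_def split: prod.splits)

lemma tens_eq_tword_ok: "tens_eq G N M u v \<Longrightarrow> tword_ok N M u = tword_ok N M v"
proof (induction rule: tens_eq.induct)
  case (rel_left n n' m)
  then show ?case using conj_closed_N conj_closed_M N.subset by auto
next
  case (rel_right n m m')
  then show ?case using conj_closed_N conj_closed_M M.subset by auto
qed auto

lemma tens_eq_append:
  assumes "tens_eq G N M a a'" "tens_eq G N M b b'" "tword_ok N M a" "tword_ok N M b"
  shows "tens_eq G N M (a @ b) (a' @ b')"
proof -
  have "tens_eq G N M ([] @ a @ b) ([] @ a' @ b)"
    using assms by (intro tens_eq.cong) auto
  moreover have "tens_eq G N M (a' @ b @ []) (a' @ b' @ [])"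
    using assms tens_eq_tword_ok by (intro tens_eq.cong) auto
  ultimately show ?thesis using tens_eq.trans by fastforce
qed

definition tens_class :: "'a tword \<Rightarrow> 'a tword set" where
  "tens_class w = {v. tens_eq G N M w v}"

lemma tens_class_eq_iff: "tens_class u = tens_class v \<longleftrightarrow> tens_eq G N M u v"
  unfolding tens_class_def using tens_eq.refl tens_eq.sym tens_eq.trans by blast

lemma carrier_tensor_grp: "carrier T = tens_class ` {w. tword_ok N M w}"
  by (simp add: tensor_grp_def tensor_carrier_def tens_class_def[abs_def])

lemma mult_tensor_grp:
  "tword_ok N M a \<Longrightarrow> tword_ok N M b \<Longrightarrow> tens_class a \<otimes>\<^bsub>T\<^esub> tens_class b = tens_class (a @ b)"
  unfolding tensor_grp_def tensor_mult_def tens_class_def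
  by (auto intro: tens_eq.refl) (metis tens_eq_tword_ok tens_eq_append tens_eq.trans)

lemma one_tensor_grp: "\<one>\<^bsub>T\<^esub> = tens_class []"
  by (simp add: tensor_grp_def tens_class_def)

definition inverse_word :: "'a tword \<Rightarrow> 'a tword" where
  "inverse_word w = rev (map (\<lambda>(n, m, b). (n, m, \<not> b)) w)"

lemma tword_ok_inverse_word [simp]: "tword_ok N M (inverse_word w) = tword_ok N M w"
  by (auto simp: inverse_word_def tword_ok_def)

lemma tens_eq_inverse_word_append: "tword_ok N M w \<Longrightarrow> tens_eq G N M (inverse_word w @ w) []"
proof (induction w)
  case Nil
  then show ?case by (simp add: inverse_word_def tens_eq.refl)
next
  case (Cons a w)
  obtain n m b where a: "a = (n, m, b)" by (cases a)
  have "tens_eq G N M (inverse_word w @ [(n, m, \<not> b), (n, m, b)] @ w) (inverse_word w @ [] @ w)"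
    using Cons.prems tens_eq.cancel[of n N m M G "\<not> b"] a by (intro tens_eq.cong) auto
  then have "tens_eq G N M (inverse_word (a # w) @ a # w) (inverse_word w @ w)"
    by (simp add: a inverse_word_def)
  then show ?case using Cons tens_eq.trans a by auto
qed

lemma group_tensor_grp: "group T"
proof (rule groupI)
  fix x
  assume "x \<in> carrier T"
  then obtain w where w: "tword_ok N M w" "x = tens_class w" by (auto simp: carrier_tensor_grp)
  show "\<exists>y\<in>carrier T. y \<otimes>\<^bsub>T\<^esub> x = \<one>\<^bsub>T\<^esub>"
    using w tens_eq_inverse_word_append[OF w(1)]
    by (intro bexI[of _ "tens_class (inverse_word w)"])
      (auto simp: carrier_tensor_grp mult_tensor_grp one_tensor_grp tens_class_eq_iff)
qed (auto simp: carrier_tensor_grp mult_tensor_grp one_tensor_grp)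

sublocale T: group T by (fact group_tensor_grp)

definition tens :: "'a \<Rightarrow> 'a \<Rightarrow> 'a tword set" where
  "tens n m = tens_class [(n, m, True)]"

lemma tens_closed: "n \<in> N \<Longrightarrow> m \<in> M \<Longrightarrow> tens n m \<in> carrier T"
  unfolding tens_def carrier_tensor_grp by auto

lemma tens_mult_left:
  "n \<in> N \<Longrightarrow> n' \<in> N \<Longrightarrow> m \<in> M \<Longrightarrow>
   tens (n \<otimes> n') m = tens (conj G n n') (conj G n m) \<otimes>\<^bsub>T\<^esub> tens n m"
  unfolding tens_def using tens_eq.rel_left[of n N n' m M G] N.subset
  by (subst mult_tensor_grp) (auto simp: tens_class_eq_iff conj_closed_N conj_closed_M)

lemma tens_mult_right:
  "n \<in> N \<Longrightarrow> m \<in> M \<Longrightarrow> m' \<in> M \<Longrightarrow>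
   tens n (m \<otimes> m') = tens n m \<otimes>\<^bsub>T\<^esub> tens (conj G m n) (conj G m m')"
  unfolding tens_def using tens_eq.rel_right[of n N m M m' G] M.subset
  by (subst mult_tensor_grp) (auto simp: tens_class_eq_iff conj_closed_N conj_closed_M)

lemma tens_one_left: "m \<in> M \<Longrightarrow> tens \<one> m = \<one>\<^bsub>T\<^esub>"
  using tens_mult_left[of \<one> \<one> m] tens_closed[of \<one> m] M.subset
  by (simp add: conj_def)

lemma tens_class_inverse_letter:
  assumes n: "n \<in> N" and m: "m \<in> M"
  shows "tens_class [(n, m, False)] = tens (inv n) (conj G n m)"
proof -
  have "tens_class [(n, m, False)] \<otimes>\<^bsub>T\<^esub> tens n m = \<one>\<^bsub>T\<^esub>"
    using n m tens_eq.cancel[OF n m, where b=False and G=G]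
    by (simp add: tens_def mult_tensor_grp one_tensor_grp tens_class_eq_iff)
  moreover have "tens_class [(n, m, False)] \<in> carrier T"
    using n m by (auto simp: carrier_tensor_grp)
  ultimately have inv_letter: "inv\<^bsub>T\<^esub> (tens n m) = tens_class [(n, m, False)]"
    using n m by (intro T.inv_equality) (auto simp: tens_closed)
  have "tens (inv n) (conj G n m) \<otimes>\<^bsub>T\<^esub> tens n m = \<one>\<^bsub>T\<^esub>"
    using tens_mult_left[OF n N.m_inv_closed[OF n] m] n m N.subset tens_one_left
    by (simp add: conj_def m_assoc)
  then have "inv\<^bsub>T\<^esub> (tens n m) = tens (inv n) (conj G n m)"
    using n m by (intro T.inv_equality) (auto simp: tens_closed conj_closed_M)
  with inv_letter show ?thesis by simp
qed

definition tens_gens :: "'a tword set set" where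
  "tens_gens = {tens n m | n m. n \<in> N \<and> m \<in> M}"

lemma tens_gens_closed: "tens_gens \<subseteq> carrier T"
  unfolding tens_gens_def using tens_closed by auto

lemma tens_class_letter_mem_gens:
  assumes "tword_ok N M [a]"
  shows "tens_class [a] \<in> tens_gens"
proof -
  obtain n m b where a: "a = (n, m, b)" and n: "n \<in> N" and m: "m \<in> M"
    using assms by (cases a) (auto simp: tword_ok_def)
  have "tens_class [a] = tens n m \<or> tens_class [a] = tens (inv n) (conj G n m)"
    using tens_class_inverse_letter[OF n m] by (cases b) (simp_all add: a tens_def)
  then show ?thesis
    using n m conj_closed_M[OF N.mem_carrier[OF n] m] N.m_inv_closed[OF n]
    unfolding tens_gens_def by blast
qed

lemma tens_class_eq_foldr:
  "tword_ok N M w \<Longrightarrow> tens_class w = foldr (\<otimes>\<^bsub>T\<^esub>) (map (\<lambda>a. tens_class [a]) w) \<one>\<^bsub>T\<^esub>"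
proof (induction w)
  case (Cons a w)
  then show ?case using mult_tensor_grp[of "[a]" w] by (cases a) simp
qed (simp add: one_tensor_grp)

lemma tensor_grp_foldr_gens:
  assumes "x \<in> carrier T"
  shows "\<exists>ss. set ss \<subseteq> tens_gens \<and> x = foldr (\<otimes>\<^bsub>T\<^esub>) ss \<one>\<^bsub>T\<^esub>"
proof -
  obtain w where w: "tword_ok N M w" "x = tens_class w"
    using assms by (auto simp: carrier_tensor_grp)
  have "set (map (\<lambda>a. tens_class [a]) w) \<subseteq> tens_gens"
    using w(1) tens_class_letter_mem_gens by (auto simp: tword_ok_def)
  with w tens_class_eq_foldr show ?thesis by blast
qed

lemma commutator_mem_N:
  assumes "n \<in> N" "m \<in> M"
  shows "commutator n m \<in> N"
proof -
  have "commutator n m = n \<otimes> conj G m (inv n)"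
    using assms N.subset M.subset by (simp add: commutator_def conj_def m_assoc)
  then show ?thesis using assms conj_closed_N M.subset by (simp add: N.m_closed)
qed

lemma commutator_mem_M:
  assumes "n \<in> N" "m \<in> M"
  shows "commutator n m \<in> M"
proof -
  have "commutator n m = conj G n m \<otimes> inv m"
    using assms N.subset M.subset by (simp add: commutator_def conj_def)
  then show ?thesis using assms conj_closed_M N.subset by (simp add: M.m_closed)
qed

lemma tens_conj_commute:
  assumes n: "n \<in> N" and m: "m \<in> M" and n': "n' \<in> N" and m': "m' \<in> M"
  shows "tens (conj G (n \<otimes> m) n') (conj G (n \<otimes> m) m') \<otimes>\<^bsub>T\<^esub> tens n m
       = tens n m \<otimes>\<^bsub>T\<^esub> tens (conj G (m \<otimes> n) n') (conj G (m \<otimes> n) m')"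
    (is "?x \<otimes>\<^bsub>T\<^esub> ?s = ?s \<otimes>\<^bsub>T\<^esub> ?y")
proof -
  have c: "n \<in> carrier G" "m \<in> carrier G" "n' \<in> carrier G" "m' \<in> carrier G"
    using n m n' m' N.subset M.subset by auto
  let ?a = "tens (conj G n n') (conj G n m)" and ?b = "tens (conj G m n) (conj G m m')"
  have mem: "conj G n n' \<in> N" "conj G n m \<in> M" "conj G n m' \<in> M"
    "conj G m n \<in> N" "conj G m n' \<in> N" "conj G m m' \<in> M"
    using c n m n' m' by (auto simp: conj_closed_N conj_closed_M)
  have closed: "?a \<in> carrier T" "?b \<in> carrier T" "?x \<in> carrier T" "?y \<in> carrier T" "?s \<in> carrier T"
    using mem c n m n' m' by (auto intro!: tens_closed conj_closed_N conj_closed_M)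
  (* expand (n n') \<otimes> (m m') in both orders and cancel the outer factors *)
  have "tens (n \<otimes> n') (m \<otimes> m') = tens (conj G n n') (conj G n m \<otimes> conj G n m') \<otimes>\<^bsub>T\<^esub> tens n (m \<otimes> m')"
    using tens_mult_left[OF n n' M.m_closed[OF m m']] c by (simp add: conj_mult_distrib)
  also have "\<dots> = ?a \<otimes>\<^bsub>T\<^esub> ?x \<otimes>\<^bsub>T\<^esub> (?s \<otimes>\<^bsub>T\<^esub> ?b)"
    using tens_mult_right[OF mem(1-3)] tens_mult_right[OF n m m'] c by (simp add: conj_conj_distrib)
  finally have left_first: "tens (n \<otimes> n') (m \<otimes> m') = ?a \<otimes>\<^bsub>T\<^esub> ?x \<otimes>\<^bsub>T\<^esub> (?s \<otimes>\<^bsub>T\<^esub> ?b)" .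
  have "tens (n \<otimes> n') (m \<otimes> m') = tens (n \<otimes> n') m \<otimes>\<^bsub>T\<^esub> tens (conj G m n \<otimes> conj G m n') (conj G m m')"
    using tens_mult_right[OF N.m_closed[OF n n'] m m'] c by (simp add: conj_mult_distrib)
  also have "\<dots> = ?a \<otimes>\<^bsub>T\<^esub> ?s \<otimes>\<^bsub>T\<^esub> (?y \<otimes>\<^bsub>T\<^esub> ?b)"
    using tens_mult_left[OF mem(4-6)] tens_mult_left[OF n n' m] c by (simp add: conj_conj_distrib)
  finally have "?a \<otimes>\<^bsub>T\<^esub> ?x \<otimes>\<^bsub>T\<^esub> (?s \<otimes>\<^bsub>T\<^esub> ?b) = ?a \<otimes>\<^bsub>T\<^esub> ?s \<otimes>\<^bsub>T\<^esub> (?y \<otimes>\<^bsub>T\<^esub> ?b)"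
    using left_first by simp
  then have "?a \<otimes>\<^bsub>T\<^esub> (?x \<otimes>\<^bsub>T\<^esub> ?s) \<otimes>\<^bsub>T\<^esub> ?b = ?a \<otimes>\<^bsub>T\<^esub> (?s \<otimes>\<^bsub>T\<^esub> ?y) \<otimes>\<^bsub>T\<^esub> ?b"
    using closed by (simp add: T.m_assoc)
  then have "?a \<otimes>\<^bsub>T\<^esub> (?x \<otimes>\<^bsub>T\<^esub> ?s) = ?a \<otimes>\<^bsub>T\<^esub> (?s \<otimes>\<^bsub>T\<^esub> ?y)"
    by (rule T.r_cancel) (use closed in auto)
  then show ?thesis
    by (rule T.l_cancel) (use closed in auto)
qed

lemma tens_conj_right:
  assumes n: "n \<in> N" and m: "m \<in> M" and g: "g \<in> carrier G"
  shows "tens n (conj G g m) = tens n m \<otimes>\<^bsub>T\<^esub> tens (conj G m n) (commutator g m)"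
proof -
  have mc: "m \<in> carrier G" using m M.subset by auto
  define d where "d = inv m \<otimes> conj G g m"
  have "d \<in> M" unfolding d_def using m mc g conj_closed_M by (simp add: M.m_closed)
  moreover have "m \<otimes> d = conj G g m" "conj G m d = commutator g m"
    unfolding d_def using mc g by (simp_all add: conj_closed conj_def commutator_def m_assoc)
  ultimately show ?thesis using tens_mult_right[OF n m] by metis
qed

end

locale abelian_tensor_product = tensor_product +
  fixes e :: nat
  assumes N_comm: "x \<in> N \<Longrightarrow> y \<in> N \<Longrightarrow> x \<otimes> y = y \<otimes> x"
    and N_exp: "x \<in> N \<Longrightarrow> x [^] e = \<one>"
begin

lemma conj_fixes_N: "k \<in> N \<Longrightarrow> a \<in> N \<Longrightarrow> conj G k a = a"
  using N_comm[of k a] N.subset by (auto simp: conj_def m_assoc)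

lemma tens_conj_commutator:
  assumes n: "n \<in> N" and m: "m \<in> M" and a: "a \<in> N" and b: "b \<in> M"
  shows "tens a (conj G (commutator n m) b) \<otimes>\<^bsub>T\<^esub> tens n m = tens n m \<otimes>\<^bsub>T\<^esub> tens a b"
proof -
  have c: "n \<in> carrier G" "m \<in> carrier G" "a \<in> carrier G" "b \<in> carrier G"
    using n m a b N.subset M.subset by auto
  define g where "g = inv (m \<otimes> n)"
  have g: "g \<in> carrier G" and nmg: "n \<otimes> m \<otimes> g = commutator n m"
    unfolding g_def commutator_def using c by (simp_all add: inv_mult_group m_assoc)
  have "conj G (n \<otimes> m) (conj G g a) = a" "conj G (n \<otimes> m) (conj G g b) = conj G (commutator n m) b"
    using c g conj_fixes_N[OF commutator_mem_N[OF n m] a] by (simp_all add: conj_conj nmg)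
  moreover have "conj G (m \<otimes> n) (conj G g a) = a" "conj G (m \<otimes> n) (conj G g b) = b"
    unfolding g_def using c by (simp_all add: conj_inv_conj)
  ultimately show ?thesis
    using tens_conj_commute[OF n m conj_closed_N[OF g a] conj_closed_M[OF g b]] by simp
qed

lemma tens_nat_pow_left_diag:
  assumes a: "a \<in> N" and d: "d \<in> N" "d \<in> M"
  shows "tens (a [^] (j::nat)) d = tens a d [^]\<^bsub>T\<^esub> j"
proof (induction j)
  case 0
  show ?case using d tens_one_left by simp
next
  case (Suc j)
  have "tens (a [^] Suc j) d = tens a d \<otimes>\<^bsub>T\<^esub> tens (a [^] j) d"
    using tens_mult_left[of "a [^] j" a d] a d N.subset conj_fixes_N
    by (simp add: nat_pow_mem_N)
  also have "\<dots> = tens a d [^]\<^bsub>T\<^esub> Suc j"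
    using Suc by (simp only: T.nat_pow_Suc2[OF tens_closed[OF a d(2)]])
  finally show ?case .
qed

lemma central_tens_diag:
  assumes a: "a \<in> N" and d: "d \<in> N" "d \<in> M"
  shows "T.central (tens a d) \<and> tens a d [^]\<^bsub>T\<^esub> e = \<one>\<^bsub>T\<^esub>"
proof
  have ad: "tens a d \<in> carrier T" using a d(2) by (rule tens_closed)
  have commute_gens: "tens a d \<otimes>\<^bsub>T\<^esub> s = s \<otimes>\<^bsub>T\<^esub> tens a d" if gen: "s \<in> tens_gens" for s
  proof -
    obtain x y where s: "s = tens x y" "x \<in> N" "y \<in> M" using gen by (auto simp: tens_gens_def)
    have "commutator a d = \<one>"
      using N_comm[OF a d(1)] a d N.subset by (simp add: commutator_def m_assoc)
    then show ?thesis
      using tens_conj_commutator[OF a d(2) s(2,3)] s M.subset by (simp add: conj_one_left)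
  qed
  show "T.central (tens a d)"
    unfolding T.central_def
  proof (intro conjI ballI ad)
    fix x
    assume "x \<in> carrier T"
    then obtain ss where ss: "set ss \<subseteq> tens_gens" "x = foldr (\<otimes>\<^bsub>T\<^esub>) ss \<one>\<^bsub>T\<^esub>"
      using tensor_grp_foldr_gens by blast
    then show "tens a d \<otimes>\<^bsub>T\<^esub> x = x \<otimes>\<^bsub>T\<^esub> tens a d"
      using T.commute_foldr_mult[OF ad _ commute_gens] tens_gens_closed by blast
  qed
  show "tens a d [^]\<^bsub>T\<^esub> e = \<one>\<^bsub>T\<^esub>"
    using tens_nat_pow_left_diag[OF a d, of e] N_exp[OF a] tens_one_left d by simp
qed

lemma central_tens_conj_commutator:
  assumes "n \<in> N" "m \<in> M"
  shows "T.central (tens (conj G m n) (commutator n m))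
       \<and> tens (conj G m n) (commutator n m) [^]\<^bsub>T\<^esub> e = \<one>\<^bsub>T\<^esub>"
  using assms N.subset M.subset
  by (intro central_tens_diag conj_closed_N commutator_mem_N commutator_mem_M) auto

lemma commutator_tens_gens:
  assumes "s \<in> tens_gens" "s' \<in> tens_gens"
  shows "T.central (T.commutator s s') \<and> T.commutator s s' [^]\<^bsub>T\<^esub> e = \<one>\<^bsub>T\<^esub>"
proof -
  obtain n m where s: "s = tens n m" "n \<in> N" "m \<in> M" using assms(1) by (auto simp: tens_gens_def)
  obtain a b where s': "s' = tens a b" "a \<in> N" "b \<in> M" using assms(2) by (auto simp: tens_gens_def)
  let ?k = "commutator n m"
  have k: "?k \<in> N" "?k \<in> carrier G" using commutator_mem_N[OF s(2,3)] N.subset by auto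
  (* conjugation by s sends s' = a \<otimes> b to a \<otimes> (k b k^-1), which is s' times a central tensor z *)
  define z where "z = tens (conj G b a) (commutator ?k b)"
  have z: "T.central z \<and> z [^]\<^bsub>T\<^esub> e = \<one>\<^bsub>T\<^esub>"
    unfolding z_def using s s' k M.subset
    by (intro central_tens_diag conj_closed_N commutator_mem_N commutator_mem_M) auto
  have closed: "s \<in> carrier T" "s' \<in> carrier T" using s s' tens_closed by auto
  have "s \<otimes>\<^bsub>T\<^esub> s' = s' \<otimes>\<^bsub>T\<^esub> z \<otimes>\<^bsub>T\<^esub> s"
    using tens_conj_commutator[OF s(2,3) s'(2,3)] tens_conj_right[OF s'(2,3) k(2)] s s' z_def by simp
  also have "s' \<otimes>\<^bsub>T\<^esub> z = z \<otimes>\<^bsub>T\<^esub> s'"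
    using z closed by (simp add: T.central_commute)
  finally have "T.commutator s s' = z"
    using z closed by (intro T.commutator_eq_central) simp_all
  with z show ?thesis by simp
qed

lemma tens_conj_nat_pow_right:
  assumes n: "n \<in> N" and m: "m \<in> M"
  shows "tens n (conj G (n [^] (j::nat)) m)
       = tens n m \<otimes>\<^bsub>T\<^esub> tens (conj G m n) (commutator n m) [^]\<^bsub>T\<^esub> j"
  using m
proof (induction j arbitrary: m)
  case 0
  then show ?case using n M.subset tens_closed by (simp add: conj_one_left)
next
  case (Suc j)
  have c: "n \<in> carrier G" "m \<in> carrier G" using n Suc.prems N.subset M.subset by auto
  let ?u = "tens (conj G m n) (commutator n m)"
  have u: "?u \<in> carrier T"
    using central_tens_conj_commutator[OF n Suc.prems] T.central_closed by blast
  have "conj G (conj G n m) n = conj G n (conj G m n)"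
    using c by (simp add: conj_def m_assoc inv_mult_group)
  also have "\<dots> = conj G m n" using conj_fixes_N[OF n conj_closed_N[OF c(2) n]] .
  moreover have "commutator n (conj G n m) = commutator n m"
    using conj_fixes_N[OF n commutator_mem_N[OF n Suc.prems]] c
    by (simp add: conj_def commutator_def m_assoc inv_mult_group)
  ultimately have "tens n (conj G (n [^] Suc j) m) = tens n (conj G n m) \<otimes>\<^bsub>T\<^esub> ?u [^]\<^bsub>T\<^esub> j"
    using Suc.IH[OF conj_closed_M[OF c(1) Suc.prems]] c by (simp add: conj_conj)
  also have "\<dots> = tens n m \<otimes>\<^bsub>T\<^esub> (?u \<otimes>\<^bsub>T\<^esub> ?u [^]\<^bsub>T\<^esub> j)"
    using tens_conj_right[OF n Suc.prems c(1)] u tens_closed[OF n Suc.prems] by (simp add: T.m_assoc)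
  also have "\<dots> = tens n m \<otimes>\<^bsub>T\<^esub> ?u [^]\<^bsub>T\<^esub> Suc j"
    by (simp only: T.nat_pow_Suc2[OF u])
  finally show ?case .
qed

lemma tens_nat_pow_left:
  assumes n: "n \<in> N" and m: "m \<in> M"
  shows "tens (n [^] (k::nat)) m
       = tens n m [^]\<^bsub>T\<^esub> k \<otimes>\<^bsub>T\<^esub> tens (conj G m n) (commutator n m) [^]\<^bsub>T\<^esub> (k * (k - 1) div 2)"
proof (induction k)
  case 0
  show ?case using m tens_one_left by simp
next
  case (Suc k)
  let ?t = "tens n m" and ?u = "tens (conj G m n) (commutator n m)"
  have t: "?t \<in> carrier T" using n m by (rule tens_closed)
  have u: "T.central ?u" using central_tens_conj_commutator[OF n m] by blast
  have ar: "Suc k * (Suc k - 1) div 2 = k + k * (k - 1) div 2"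
    by (cases k) auto
  have "tens (n [^] Suc k) m = tens n (conj G (n [^] k) m) \<otimes>\<^bsub>T\<^esub> tens (n [^] k) m"
    using tens_mult_left[OF nat_pow_mem_N[OF n] n m] conj_fixes_N[OF nat_pow_mem_N[OF n] n] by simp
  also have "\<dots> = ?t \<otimes>\<^bsub>T\<^esub> ?u [^]\<^bsub>T\<^esub> k \<otimes>\<^bsub>T\<^esub> (?t [^]\<^bsub>T\<^esub> k \<otimes>\<^bsub>T\<^esub> ?u [^]\<^bsub>T\<^esub> (k * (k - 1) div 2))"
    using tens_conj_nat_pow_right[OF n m] Suc.IH by simp
  also have "\<dots> = ?t \<otimes>\<^bsub>T\<^esub> (?u [^]\<^bsub>T\<^esub> k \<otimes>\<^bsub>T\<^esub> ?t [^]\<^bsub>T\<^esub> k) \<otimes>\<^bsub>T\<^esub> ?u [^]\<^bsub>T\<^esub> (k * (k - 1) div 2)"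
    using t T.central_closed[OF u] by (simp add: T.m_assoc)
  also have "\<dots> = (?t \<otimes>\<^bsub>T\<^esub> ?t [^]\<^bsub>T\<^esub> k) \<otimes>\<^bsub>T\<^esub> (?u [^]\<^bsub>T\<^esub> k \<otimes>\<^bsub>T\<^esub> ?u [^]\<^bsub>T\<^esub> (k * (k - 1) div 2))"
    using t T.central_closed[OF u] T.central_commute[OF T.central_nat_pow[OF u, of k], of "?t [^]\<^bsub>T\<^esub> k"]
    by (simp add: T.m_assoc)
  also have "\<dots> = ?t [^]\<^bsub>T\<^esub> Suc k \<otimes>\<^bsub>T\<^esub> ?u [^]\<^bsub>T\<^esub> (Suc k * (Suc k - 1) div 2)"
    by (simp only: T.nat_pow_Suc2[OF t] T.nat_pow_mult[OF T.central_closed[OF u]] ar)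
  finally show ?case .
qed

lemma tens_pow_eq_one:
  assumes n: "n \<in> N" and m: "m \<in> M" and dvd: "e dvd e * (e - 1) div 2 * r"
  shows "tens n m [^]\<^bsub>T\<^esub> (e * r) = \<one>\<^bsub>T\<^esub>"
proof -
  let ?t = "tens n m" and ?u = "tens (conj G m n) (commutator n m)"
  let ?v = "?u [^]\<^bsub>T\<^esub> (e * (e - 1) div 2)"
  have t: "?t \<in> carrier T" using n m by (rule tens_closed)
  have u: "T.central ?u" "?u [^]\<^bsub>T\<^esub> e = \<one>\<^bsub>T\<^esub>"
    using central_tens_conj_commutator[OF n m] by auto
  obtain q where q: "e * (e - 1) div 2 * r = e * q" using dvd by blast
  have v: "T.central ?v" using u(1) by (rule T.central_nat_pow)
  have "?v [^]\<^bsub>T\<^esub> r = (?u [^]\<^bsub>T\<^esub> e) [^]\<^bsub>T\<^esub> q"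
    using T.central_closed[OF u(1)] by (simp only: T.nat_pow_pow q)
  then have v_pow: "?v [^]\<^bsub>T\<^esub> r = \<one>\<^bsub>T\<^esub>" using u(2) by simp
  have "?t [^]\<^bsub>T\<^esub> e \<otimes>\<^bsub>T\<^esub> ?v = \<one>\<^bsub>T\<^esub>"
    using tens_nat_pow_left[OF n m, of e] N_exp[OF n] tens_one_left[OF m] by simp
  then have "(?t [^]\<^bsub>T\<^esub> e) [^]\<^bsub>T\<^esub> r \<otimes>\<^bsub>T\<^esub> ?v [^]\<^bsub>T\<^esub> r = \<one>\<^bsub>T\<^esub>"
    using T.pow_mult_distrib[OF T.central_commute[OF v, symmetric], of "?t [^]\<^bsub>T\<^esub> e" r]
      t T.central_closed[OF v] by simp
  then show ?thesis using v_pow t by (simp add: T.nat_pow_pow)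
qed

lemma tensor_grp_pow_eq_one:
  assumes gens_pow: "\<And>n m. n \<in> N \<Longrightarrow> m \<in> M \<Longrightarrow> tens n m [^]\<^bsub>T\<^esub> E = \<one>\<^bsub>T\<^esub>"
    and dvd: "e dvd E * (E - 1) div 2" and x: "x \<in> carrier T"
  shows "x [^]\<^bsub>T\<^esub> (E::nat) = \<one>\<^bsub>T\<^esub>"
proof -
  obtain ss where "set ss \<subseteq> tens_gens" "x = foldr (\<otimes>\<^bsub>T\<^esub>) ss \<one>\<^bsub>T\<^esub>"
    using tensor_grp_foldr_gens[OF x] by blast
  moreover have "s [^]\<^bsub>T\<^esub> E = \<one>\<^bsub>T\<^esub>" if "s \<in> tens_gens" for s
    using that gens_pow by (auto simp: tens_gens_def)
  ultimately show ?thesis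
    using T.foldr_gens_pow_eq_one[OF tens_gens_closed commutator_tens_gens _ _ dvd] by blast
qed

lemma tensor_grp_pow_exponent_odd:
  assumes "odd e" and "x \<in> carrier T"
  shows "x [^]\<^bsub>T\<^esub> e = \<one>\<^bsub>T\<^esub>"
proof -
  have "e * (e - 1) div 2 = e * ((e - 1) div 2)"
    using assms(1) by (simp add: div_mult_swap)
  then have "e dvd e * (e - 1) div 2" by simp
  then show ?thesis
    using tens_pow_eq_one[of _ _ 1] tensor_grp_pow_eq_one[of e] assms(2) by simp
qed

lemma tensor_grp_pow_double_exponent:
  assumes "x \<in> carrier T"
  shows "x [^]\<^bsub>T\<^esub> (2 * e) = \<one>\<^bsub>T\<^esub>"
proof -
  have "even (e * (e - 1))" by (cases "even e") auto
  then have "e * (e - 1) div 2 * 2 = e * (e - 1)" by simp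
  moreover have "2 * e * (2 * e - 1) div 2 = e * (2 * e - 1)" by simp
  ultimately show ?thesis
    using tens_pow_eq_one[of _ _ 2] tensor_grp_pow_eq_one[of "2 * e"] assms by (simp add: mult.commute)
qed

end

theorem lemma4p2:
  fixes G :: "('g, 'b) monoid_scheme" and N M :: "'g set"
  assumes "group G"
    and "N \<lhd> G" and "M \<lhd> G"
    and "\<forall>x\<in>N. \<forall>y\<in>N. x \<otimes>\<^bsub>G\<^esub> y = y \<otimes>\<^bsub>G\<^esub> x"
    and "\<exists>e>0. \<forall>x\<in>N. x [^]\<^bsub>G\<^esub> (e::nat) = \<one>\<^bsub>G\<^esub>"
  shows "(odd (group_exponent (G\<lparr>carrier := N\<rparr>)) \<longrightarrow>
            group_exponent (tensor_grp G N M) dvd group_exponent (G\<lparr>carrier := N\<rparr>))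
       \<and> (even (group_exponent (G\<lparr>carrier := N\<rparr>)) \<longrightarrow>
            group_exponent (tensor_grp G N M) dvd 2 * group_exponent (G\<lparr>carrier := N\<rparr>))"
proof -
  let ?e = "group_exponent (G\<lparr>carrier := N\<rparr>)"
  have pow_N: "x [^]\<^bsub>G\<lparr>carrier := N\<rparr>\<^esub> k = x [^]\<^bsub>G\<^esub> k" for x and k :: nat
    by (simp add: nat_pow_def)
  have e: "0 < ?e" "\<And>x. x \<in> N \<Longrightarrow> x [^]\<^bsub>G\<^esub> ?e = \<one>\<^bsub>G\<^esub>"
    using group_exponent_spec[of "G\<lparr>carrier := N\<rparr>"] assms(5) by (simp_all add: pow_N)
  have "tensor_product G N M"
    using assms(1-3) by (simp add: tensor_product_def tensor_product_axioms_def)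
  then interpret abelian_tensor_product G N M ?e
    using assms(4) e(2) by (simp add: abelian_tensor_product_def abelian_tensor_product_axioms_def)
  show ?thesis
    using tensor_grp_pow_exponent_odd tensor_grp_pow_double_exponent e(1)
    by (auto intro: T.group_exponent_dvd)
qed

end
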